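(* Let $\alpha,\beta>0$, let $c(\psi)=\sqrt{\alpha\cos^2\psi+\beta\sin^2\psi}$, let $p\ge0$ be an integer, and let $X_{\Delta x}^p(\Omega)$ be the discontinuous piecewise polynomial space on the periodic mesh described in the context. Suppose $v,w,\psi:[0,T]\to X_{\Delta x}^p(\Omega)$ are differentiable in time and, for every $t\in[0,T]$, satisfy (with $c=c(\psi(x,t))$ inside integrals, $x$-derivatives taken cellwise, sums over $j=1,\dots,N$) $$\sum_j\int_{\Omega_j}v_t\phi\,dx+\sum_j\int_{\Omega_j}c\,w\phi_x\,dx-\sum_j\overline{c}_{j+1/2}\overline{w}_{j+1/2}\phi^-_{j+1/2}+\sum_j\overline{c}_{j-1/2}\overline{w}_{j-1/2}\phi^+_{j-1/2}=\sum_j\int_{\Omega_j}c\,(w\phi)_x\,dx-\sum_j\overline{c}_{j+1/2}w^-_{j+1/2}\phi^-_{j+1/2}+\sum_j\overline{c}_{j-1/2}w^+_{j-1/2}\phi^+_{j-1/2},$$ $$\sum_j\int_{\Omega_j}w_t\eta\,dx+\sum_j\int_{\Omega_j}c\,v\eta_x\,dx-\sum_j\overline{c}_{j+1/2}\overline{v}_{j+1/2}\eta^-_{j+1/2}+\sum_j\overline{c}_{j-1/2}\overline{v}_{j-1/2}\eta^+_{j-1/2}=0,$$ $$\sum_j\int_{\Omega_j}\psi_t\zeta\,dx=\sum_j\int_{\Omega_j}v\zeta\,dx,$$ for all $\phi,\eta,\zeta\in X_{\Delta x}^p(\Omega)$. Then $$\frac{d}{dt}\left(\sum_{j=1}^N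\int_{\Omega_j}(v^2+w^2)\,dx\right)=0.$$
   Context: The domain $\Omega$ is partitioned into cells $\Omega_j=[x_{j-1/2},x_{j+1/2}]$, $j=1,\dots,N$. $X_{\Delta x}^p(\Omega)=\{u\in L^2(\Omega): u|_{\Omega_j}$ is a polynomial of degree $\le p$ for each $j\}$. For a grid function $u$, $u^+_{j+1/2}$ and $u^-_{j+1/2}$ denote its traces at $x_{j+1/2}$ from the right and left respectively; $\overline{u}_{j+1/2}=(u^+_{j+1/2}+u^-_{j+1/2})/2$ and $\llbracket u\rrbracket_{j+1/2}=u^+_{j+1/2}-u^-_{j+1/2}$. Also $c^\pm_{j+1/2}=c(\psi^\pm_{j+1/2})$ and $\overline{c}_{j+1/2}=(c^+_{j+1/2}+c^-_{j+1/2})/2$. Periodic boundary conditions: the endpoints $x_{1/2}$ and $x_{N+1/2}$ are identified, i.e. $u^-_{1/2}:=u^-_{N+1/2}$ (trace from cell $N$) and $u^+_{N+1/2}:=u^+_{1/2}$ (trace from cell $1$), for all grid functions including $\psi$ and the test functions. *)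

theory Defs
  imports "HOL-Analysis.Analysis" "HOL-Computational_Algebra.Polynomial"
begin

(* Mesh: nodes xs 0 = x_{1/2} < xs 1 = x_{3/2} < ... < xs N = x_{N+1/2}.
   Cell j (j = 1..N) is [xs (j-1), xs j].
   A grid function u in X^p is represented by its cell polynomials U j, j = 1..N. *)

definition mesh :: "(nat \<Rightarrow> real) \<Rightarrow> nat \<Rightarrow> bool" where
  "mesh xs N \<longleftrightarrow> N \<ge> 1 \<and> (\<forall>j<N. xs j < xs (Suc j))"

definition Xsp :: "nat \<Rightarrow> nat \<Rightarrow> (nat \<Rightarrow> real poly) set" where
  "Xsp N p = {U. \<forall>j\<in>{1..N}. degree (U j) \<le> p}"

(* u^-_{j+1/2}, j = 0..N, with periodic convention u^-_{1/2} = u^-_{N+1/2} *)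
definition trm :: "(nat \<Rightarrow> real) \<Rightarrow> nat \<Rightarrow> (nat \<Rightarrow> real poly) \<Rightarrow> nat \<Rightarrow> real" where
  "trm xs N U j = (if j = 0 then poly (U N) (xs N) else poly (U j) (xs j))"

(* u^+_{j+1/2}, j = 0..N, with periodic convention u^+_{N+1/2} = u^+_{1/2} *)
definition trp :: "(nat \<Rightarrow> real) \<Rightarrow> nat \<Rightarrow> (nat \<Rightarrow> real poly) \<Rightarrow> nat \<Rightarrow> real" where
  "trp xs N U j = (if j = N then poly (U 1) (xs 0) else poly (U (Suc j)) (xs j))"

definition avg :: "(nat \<Rightarrow> real) \<Rightarrow> nat \<Rightarrow> (nat \<Rightarrow> real poly) \<Rightarrow> nat \<Rightarrow> real" where
  "avg xs N U j = (trp xs N U j + trm xs N U j) / 2"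

definition cfun :: "real \<Rightarrow> real \<Rightarrow> real \<Rightarrow> real" where
  "cfun \<alpha> \<beta> \<psi> = sqrt (\<alpha> * (cos \<psi>)\<^sup>2 + \<beta> * (sin \<psi>)\<^sup>2)"

definition cbar :: "real \<Rightarrow> real \<Rightarrow> (nat \<Rightarrow> real) \<Rightarrow> nat \<Rightarrow> (nat \<Rightarrow> real poly) \<Rightarrow> nat \<Rightarrow> real" where
  "cbar \<alpha> \<beta> xs N \<Psi> j = (cfun \<alpha> \<beta> (trp xs N \<Psi> j) + cfun \<alpha> \<beta> (trm xs N \<Psi> j)) / 2"

definition cint :: "(nat \<Rightarrow> real) \<Rightarrow> nat \<Rightarrow> (real \<Rightarrow> real) \<Rightarrow> real" where
  "cint xs j f = integral {xs (j - 1)..xs j} f"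

end

theory Submission
  imports Defs
begin

(* Test the v-equation with v, the w-equation with w, and add. By the product rule the volume
   terms combine into the integral of c (w v)_x that the first equation carries on its right-hand
   side, and at every interface the central fluxes satisfy {w}[v] + {v}[w] = [w v]; with periodic
   traces all boundary terms then cancel, leaving \<Sum>\<^sub>j \<integral> v_t v + w_t w = 0. This is half the
   time derivative of the energy: on each cell, in a Lagrange basis, the energy is a quadratic
   form in finitely many node values, each differentiable in time by hypothesis. *)

definition lagrange_basis :: "(nat \<Rightarrow> 'a::field) \<Rightarrow> nat \<Rightarrow> nat \<Rightarrow> 'a poly" where
  "lagrange_basis z p k = (\<Prod>m\<in>{..p}-{k}. smult (1 / (z k - z m)) [:- z m, 1:])"

lemma poly_lagrange_basis_node:
  assumes "inj_on z {..p}" "k \<le> p" "m \<le> p"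
  shows "poly (lagrange_basis z p k) (z m) = (if k = m then 1 else 0)"
proof (cases "k = m")
  case True
  have "poly (lagrange_basis z p k) (z m) = (\<Prod>i\<in>{..p}-{k}. 1)"
    unfolding lagrange_basis_def poly_prod
  proof (rule prod.cong)
    fix i assume "i \<in> {..p}-{k}"
    with assms have "z k \<noteq> z i" by (auto dest: inj_onD)
    then show "poly (smult (1 / (z k - z i)) [:- z i, 1:]) (z m) = 1"
      using True by (simp add: diff_divide_distrib[symmetric])
  qed simp
  with True show ?thesis by simp
next
  case False
  have "poly (lagrange_basis z p k) (z m) = 0"
    unfolding lagrange_basis_def poly_prod by (rule prod_zero) (use False assms in auto)
  with False show ?thesis by simp
qed

lemma degree_lagrange_basis:
  assumes "k \<le> p"
  shows "degree (lagrange_basis z p k) \<le> p"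
proof -
  have "degree (lagrange_basis z p k) \<le> (\<Sum>m\<in>{..p}-{k}. 1)"
    unfolding lagrange_basis_def
  proof (rule order.trans[OF degree_prod_sum_le], simp, rule sum_mono)
    fix m
    show "(degree \<circ> (\<lambda>m. smult (1 / (z k - z m)) [:- z m, 1:])) m \<le> 1"
      unfolding o_def by (rule order.trans[OF degree_smult_le]) simp
  qed
  also have "\<dots> = p" using assms by simp
  finally show ?thesis .
qed

lemma lagrange_interpolation:
  assumes "inj_on z {..p}" "degree Q \<le> p"
  shows "Q = (\<Sum>k\<le>p. smult (poly Q (z k)) (lagrange_basis z p k))"
proof (rule poly_eqI_degree[where A = "z ` {..p}"])
  fix y assume "y \<in> z ` {..p}"
  then obtain m where m: "m \<le> p" "y = z m" by auto
  have "poly (\<Sum>k\<le>p. smult (poly Q (z k)) (lagrange_basis z p k)) y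
      = (\<Sum>k\<le>p. poly Q (z k) * (if k = m then 1 else 0))"
    unfolding poly_sum using m poly_lagrange_basis_node[OF assms(1)] by simp
  also have "\<dots> = poly Q y" using m by (simp add: if_distrib cong: if_cong)
  finally show "poly Q y = poly (\<Sum>k\<le>p. smult (poly Q (z k)) (lagrange_basis z p k)) y" by simp
next
  have card: "card (z ` {..p}) = Suc p" using assms(1) by (simp add: card_image)
  then show "degree Q < card (z ` {..p})" using assms(2) by simp
  have "degree (\<Sum>k\<le>p. smult (poly Q (z k)) (lagrange_basis z p k)) \<le> p"
    by (rule degree_sum_le) (auto intro: order.trans[OF degree_smult_le] degree_lagrange_basis)
  with card show "degree (\<Sum>k\<le>p. smult (poly Q (z k)) (lagrange_basis z p k)) < card (z ` {..p})"
    by simp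
qed

lemma poly_lagrange_interpolation:
  assumes "inj_on z {..p}" "degree Q \<le> p"
  shows "poly Q x = (\<Sum>k\<le>p. poly Q (z k) * poly (lagrange_basis z p k) x)"
  by (subst lagrange_interpolation[OF assms]) (simp add: poly_sum)

lemma interval_has_distinct_points:
  fixes a b :: real
  assumes "a < b"
  obtains z :: "nat \<Rightarrow> real" where "inj_on z {..p}" "z ` {..p} \<subseteq> {a..b}"
proof
  define z where "z k = a + (b - a) * (real k / (real p + 1))" for k
  show "inj_on z {..p}"
    using assms by (auto intro!: inj_onI simp: z_def)
  have "real k / (real p + 1) \<le> 1" if "k \<le> p" for k
    using that by (simp add: divide_simps)
  then have bound: "(b - a) * (real k / (real p + 1)) \<le> b - a" if "k \<le> p" for k
    using that assms mult_left_le[of "real k / (real p + 1)" "b - a"] by simp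
  show "z ` {..p} \<subseteq> {a..b}"
  proof
    fix y assume "y \<in> z ` {..p}"
    then obtain k where "k \<le> p" "y = z k" by auto
    moreover have "0 \<le> (b - a) * (real k / (real p + 1))" using assms by simp
    ultimately show "y \<in> {a..b}"
      using bound[of k] unfolding z_def by simp
  qed
qed

lemma integral_sum_mult_sum:
  fixes f g :: "nat \<Rightarrow> real \<Rightarrow> real"
  assumes "finite A" "finite B"
    and "\<And>k m. k \<in> A \<Longrightarrow> m \<in> B \<Longrightarrow> (\<lambda>x. f k x * g m x) integrable_on S"
  shows "integral S (\<lambda>x. (\<Sum>k\<in>A. c k * f k x) * (\<Sum>m\<in>B. d m * g m x))
       = (\<Sum>k\<in>A. \<Sum>m\<in>B. c k * d m * integral S (\<lambda>x. f k x * g m x))"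
proof -
  have "integral S (\<lambda>x. (\<Sum>k\<in>A. c k * f k x) * (\<Sum>m\<in>B. d m * g m x))
      = integral S (\<lambda>x. \<Sum>k\<in>A. \<Sum>m\<in>B. c k * d m * (f k x * g m x))"
    by (simp add: sum_product mult_ac)
  also have "\<dots> = (\<Sum>k\<in>A. integral S (\<lambda>x. \<Sum>m\<in>B. c k * d m * (f k x * g m x)))"
    using assms by (intro integral_sum) (auto intro!: integrable_sum integrable_on_mult_right)
  also have "\<dots> = (\<Sum>k\<in>A. \<Sum>m\<in>B. integral S (\<lambda>x. c k * d m * (f k x * g m x)))"
    using assms by (intro sum.cong refl integral_sum) (auto intro!: integrable_on_mult_right)
  finally show ?thesis by simp
qed

lemma has_real_derivative_trivial_within:
  assumes "at t within S = bot"
  shows "(f has_real_derivative D) (at t within S)"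
  unfolding has_field_derivative_def assms by (intro has_derivative_bot bounded_linear_mult_right)

lemma has_real_derivative_poly_lagrange_interpolation:
  fixes q :: "real \<Rightarrow> real poly"
  assumes z: "inj_on z {..p}" "z ` {..p} \<subseteq> A"
    and "t \<in> S" "at t within S \<noteq> bot"
    and deg: "\<And>s. s \<in> S \<Longrightarrow> degree (q s) \<le> p"
    and dq: "\<And>x. x \<in> A \<Longrightarrow> ((\<lambda>s. poly (q s) x) has_real_derivative poly q' x) (at t within S)"
    and "x \<in> A"
  shows "poly q' x = (\<Sum>k\<le>p. poly q' (z k) * poly (lagrange_basis z p k) x)"
proof -
  have "((\<lambda>s. \<Sum>k\<le>p. poly (q s) (z k) * poly (lagrange_basis z p k) x) has_real_derivative
      (\<Sum>k\<le>p. poly q' (z k) * poly (lagrange_basis z p k) x)) (at t within S)"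
    using z(2) by (intro DERIV_sum DERIV_cmult_right dq) auto
  then have "((\<lambda>s. poly (q s) x) has_real_derivative
      (\<Sum>k\<le>p. poly q' (z k) * poly (lagrange_basis z p k) x)) (at t within S)"
    by (rule has_field_derivative_transform_within[OF _ zero_less_one \<open>t \<in> S\<close>])
       (simp add: poly_lagrange_interpolation[OF z(1) deg])
  then show ?thesis
    using has_field_derivative_unique[OF dq[OF \<open>x \<in> A\<close>] _ \<open>at t within S \<noteq> bot\<close>] by blast
qed

lemma has_real_derivative_integral_poly_mult:
  fixes q r :: "real \<Rightarrow> real poly"
  assumes "a < b" "t \<in> S"
    and deg: "\<And>s. s \<in> S \<Longrightarrow> degree (q s) \<le> p" "\<And>s. s \<in> S \<Longrightarrow> degree (r s) \<le> p"
    and dq: "\<And>x. x \<in> {a..b} \<Longrightarrow> ((\<lambda>s. poly (q s) x) has_real_derivative poly q' x) (at t within S)"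
    and dr: "\<And>x. x \<in> {a..b} \<Longrightarrow> ((\<lambda>s. poly (r s) x) has_real_derivative poly r' x) (at t within S)"
  shows "((\<lambda>s. integral {a..b} (\<lambda>x. poly (q s) x * poly (r s) x)) has_real_derivative
           integral {a..b} (\<lambda>x. poly q' x * poly (r t) x + poly (q t) x * poly r' x)) (at t within S)"
proof (cases "at t within S = bot")
  case True
  then show ?thesis by (rule has_real_derivative_trivial_within)
next
  case nontrivial: False
  obtain z where z: "inj_on z {..p}" "z ` {..p} \<subseteq> {a..b}"
    using interval_has_distinct_points[OF \<open>a < b\<close>] .
  define L where "L k = poly (lagrange_basis z p k)" for k
  define K where "K k m = integral {a..b} (\<lambda>x. L k x * L m x)" for k m
  define G where "G s = (\<Sum>k\<le>p. \<Sum>m\<le>p. poly (q s) (z k) * poly (r s) (z m) * K k m)" for s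
  have expand: "integral {a..b} (\<lambda>x. (\<Sum>k\<le>p. c k * L k x) * (\<Sum>m\<le>p. d m * L m x))
      = (\<Sum>k\<le>p. \<Sum>m\<le>p. c k * d m * K k m)" for c d
    unfolding K_def L_def
    by (rule integral_sum_mult_sum) (auto intro!: integrable_continuous_interval continuous_intros)
  note q_rep = poly_lagrange_interpolation[OF z(1) deg(1), folded L_def]
    and r_rep = poly_lagrange_interpolation[OF z(1) deg(2), folded L_def]
    and q'_rep = has_real_derivative_poly_lagrange_interpolation[OF z \<open>t \<in> S\<close> nontrivial deg(1) dq, folded L_def]
    and r'_rep = has_real_derivative_poly_lagrange_interpolation[OF z \<open>t \<in> S\<close> nontrivial deg(2) dr, folded L_def]
  have G_eq: "G s = integral {a..b} (\<lambda>x. poly (q s) x * poly (r s) x)" if "s \<in> S" for s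
    unfolding G_def expand[symmetric] by (metis q_rep[OF that] r_rep[OF that])
  have node_deriv: "((\<lambda>s. poly (q s) (z k) * poly (r s) (z m)) has_real_derivative
      poly q' (z k) * poly (r t) (z m) + poly (q t) (z k) * poly r' (z m)) (at t within S)"
    if "k \<le> p" "m \<le> p" for k m
  proof -
    have "z k \<in> {a..b}" "z m \<in> {a..b}" using z(2) that by auto
    from DERIV_mult'[OF dq[OF this(1)] dr[OF this(2)]] show ?thesis by (simp add: ac_simps)
  qed
  have "(G has_real_derivative (\<Sum>k\<le>p. \<Sum>m\<le>p.
      (poly q' (z k) * poly (r t) (z m) + poly (q t) (z k) * poly r' (z m)) * K k m)) (at t within S)"
    unfolding G_def by (intro DERIV_sum DERIV_cmult_right node_deriv) auto
  also have "(\<Sum>k\<le>p. \<Sum>m\<le>p.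
      (poly q' (z k) * poly (r t) (z m) + poly (q t) (z k) * poly r' (z m)) * K k m)
    = integral {a..b} (\<lambda>x. poly q' x * poly (r t) x) + integral {a..b} (\<lambda>x. poly (q t) x * poly r' x)"
    unfolding distrib_right sum.distrib expand[symmetric]
    by (intro arg_cong2[where f = "(+)"] integral_cong)
       (metis q_rep[OF \<open>t \<in> S\<close>] r_rep[OF \<open>t \<in> S\<close>] q'_rep r'_rep)+
  also have "\<dots> = integral {a..b} (\<lambda>x. poly q' x * poly (r t) x + poly (q t) x * poly r' x)"
    by (intro integral_add[symmetric] integrable_continuous_interval continuous_intros)
  finally show ?thesis
    by (rule has_field_derivative_transform_within[OF _ zero_less_one \<open>t \<in> S\<close>]) (simp add: G_eq)
qed

lemma has_real_derivative_integral_poly_square: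
  fixes q :: "real \<Rightarrow> real poly"
  assumes "a < b" "t \<in> S" "\<And>s. s \<in> S \<Longrightarrow> degree (q s) \<le> p"
    and "\<And>x. x \<in> {a..b} \<Longrightarrow> ((\<lambda>s. poly (q s) x) has_real_derivative poly q' x) (at t within S)"
  shows "((\<lambda>s. integral {a..b} (\<lambda>x. (poly (q s) x)\<^sup>2)) has_real_derivative
           2 * integral {a..b} (\<lambda>x. poly q' x * poly (q t) x)) (at t within S)"
  using has_real_derivative_integral_poly_mult[OF assms(1,2,3,3,4,4)]
  by (simp add: power2_eq_square mult.commute[of "poly (q t) _"] flip: mult_2)

lemma cint_pderiv_mult:
  assumes "continuous_on {xs (j - 1)..xs j} g"
  shows "cint xs j (\<lambda>x. g x * poly W x * poly (pderiv V) x)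
       + cint xs j (\<lambda>x. g x * poly V x * poly (pderiv W) x)
       = cint xs j (\<lambda>x. g x * poly (pderiv (W * V)) x)"
  unfolding cint_def using assms
  by (subst integral_add[symmetric])
     (auto intro!: integrable_continuous_interval continuous_intros integral_cong
       simp: pderiv_mult algebra_simps)

lemma trm_periodic: "trm xs N U 0 = trm xs N U N"
  by (simp add: trm_def)

lemma trp_periodic: "trp xs N U 0 = trp xs N U N"
  by (simp add: trp_def)

lemma avg_periodic: "avg xs N U 0 = avg xs N U N"
  by (simp add: avg_def trm_periodic trp_periodic)

lemma cbar_periodic: "cbar \<alpha> \<beta> xs N \<Psi> 0 = cbar \<alpha> \<beta> xs N \<Psi> N"
  by (simp add: cbar_def trm_periodic trp_periodic)

lemma sum_pred_periodic:
  fixes f :: "nat \<Rightarrow> 'a::comm_monoid_add"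
  assumes "f 0 = f N"
  shows "(\<Sum>j=1..N. f (j - 1)) = (\<Sum>j=1..N. f j)"
proof (cases N)
  case (Suc n)
  have "(\<Sum>j=1..N. f (j - 1)) = (\<Sum>i=0..n. f i)"
    unfolding Suc by (simp only: One_nat_def sum.shift_bounds_cl_Suc_ivl) simp
  also have "\<dots> = f N + (\<Sum>i=1..n. f i)"
    by (simp add: sum.atLeast_Suc_atMost assms)
  also have "\<dots> = (\<Sum>j=1..N. f j)"
    unfolding Suc by (simp add: add.commute)
  finally show ?thesis .
qed simp

lemma central_flux_balance:
  assumes "c 0 = c N"
  shows "(\<Sum>j=1..N. c (j - 1) * avg xs N W (j - 1) * trp xs N V (j - 1))
       - (\<Sum>j=1..N. c j * avg xs N W j * trm xs N V j)
       + (\<Sum>j=1..N. c (j - 1) * avg xs N V (j - 1) * trp xs N W (j - 1))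
       - (\<Sum>j=1..N. c j * avg xs N V j * trm xs N W j)
     = (\<Sum>j=1..N. c (j - 1) * trp xs N W (j - 1) * trp xs N V (j - 1))
       - (\<Sum>j=1..N. c j * trm xs N W j * trm xs N V j)"
    (is "?lhs = ?rhs")
proof -
  have shifts:
    "(\<Sum>j=1..N. c (j - 1) * avg xs N W (j - 1) * trp xs N V (j - 1))
      = (\<Sum>j=1..N. c j * avg xs N W j * trp xs N V j)"
    "(\<Sum>j=1..N. c (j - 1) * avg xs N V (j - 1) * trp xs N W (j - 1))
      = (\<Sum>j=1..N. c j * avg xs N V j * trp xs N W j)"
    "(\<Sum>j=1..N. c (j - 1) * trp xs N W (j - 1) * trp xs N V (j - 1))
      = (\<Sum>j=1..N. c j * trp xs N W j * trp xs N V j)"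
    by (rule sum_pred_periodic, simp add: assms avg_periodic trp_periodic)+
  have "?lhs = (\<Sum>j=1..N. c j * (avg xs N W j * (trp xs N V j - trm xs N V j)
                                 + avg xs N V j * (trp xs N W j - trm xs N W j)))"
    unfolding shifts by (simp add: algebra_simps sum.distrib sum_subtractf)
  also have "\<dots> = (\<Sum>j=1..N. c j * (trp xs N W j * trp xs N V j - trm xs N W j * trm xs N V j))"
    unfolding avg_def by (intro sum.cong refl) (simp add: field_simps)
  also have "\<dots> = ?rhs"
    unfolding shifts by (simp add: algebra_simps sum_subtractf)
  finally show ?thesis .
qed

lemma mesh_cell_nonempty:
  assumes "mesh xs N" "j \<in> {1..N}"
  shows "xs (j - 1) < xs j"
proof -
  have "j - 1 < N" "Suc (j - 1) = j" using assms(2) by auto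
  then show ?thesis using assms(1) unfolding mesh_def by metis
qed

theorem proposition2p3:
  fixes \<alpha> \<beta> T :: real and p N :: nat and xs :: "nat \<Rightarrow> real"
    and v w \<psi> vt wt \<psi>t :: "real \<Rightarrow> nat \<Rightarrow> real poly"
  assumes "\<alpha> > 0" and "\<beta> > 0" and "mesh xs N"
    and inX: "\<And>t. t \<in> {0..T} \<Longrightarrow> v t \<in> Xsp N p \<and> w t \<in> Xsp N p \<and> \<psi> t \<in> Xsp N p"
    and dv: "\<And>t j x. t \<in> {0..T} \<Longrightarrow> j \<in> {1..N} \<Longrightarrow> x \<in> {xs (j - 1)..xs j} \<Longrightarrow>
        ((\<lambda>s. poly (v s j) x) has_real_derivative poly (vt t j) x) (at t within {0..T})"
    and dw: "\<And>t j x. t \<in> {0..T} \<Longrightarrow> j \<in> {1..N} \<Longrightarrow> x \<in> {xs (j - 1)..xs j} \<Longrightarrow>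
        ((\<lambda>s. poly (w s j) x) has_real_derivative poly (wt t j) x) (at t within {0..T})"
    and d\<psi>: "\<And>t j x. t \<in> {0..T} \<Longrightarrow> j \<in> {1..N} \<Longrightarrow> x \<in> {xs (j - 1)..xs j} \<Longrightarrow>
        ((\<lambda>s. poly (\<psi> s j) x) has_real_derivative poly (\<psi>t t j) x) (at t within {0..T})"
    and eq1: "\<And>t \<phi>. t \<in> {0..T} \<Longrightarrow> \<phi> \<in> Xsp N p \<Longrightarrow>
        (\<Sum>j=1..N. cint xs j (\<lambda>x. poly (vt t j) x * poly (\<phi> j) x))
      + (\<Sum>j=1..N. cint xs j (\<lambda>x. cfun \<alpha> \<beta> (poly (\<psi> t j) x) * poly (w t j) x * poly (pderiv (\<phi> j)) x))
      - (\<Sum>j=1..N. cbar \<alpha> \<beta> xs N (\<psi> t) j * avg xs N (w t) j * trm xs N \<phi> j)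
      + (\<Sum>j=1..N. cbar \<alpha> \<beta> xs N (\<psi> t) (j - 1) * avg xs N (w t) (j - 1) * trp xs N \<phi> (j - 1))
      = (\<Sum>j=1..N. cint xs j (\<lambda>x. cfun \<alpha> \<beta> (poly (\<psi> t j) x) * poly (pderiv (w t j * \<phi> j)) x))
      - (\<Sum>j=1..N. cbar \<alpha> \<beta> xs N (\<psi> t) j * trm xs N (w t) j * trm xs N \<phi> j)
      + (\<Sum>j=1..N. cbar \<alpha> \<beta> xs N (\<psi> t) (j - 1) * trp xs N (w t) (j - 1) * trp xs N \<phi> (j - 1))"
    and eq2: "\<And>t \<eta>. t \<in> {0..T} \<Longrightarrow> \<eta> \<in> Xsp N p \<Longrightarrow>
        (\<Sum>j=1..N. cint xs j (\<lambda>x. poly (wt t j) x * poly (\<eta> j) x))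
      + (\<Sum>j=1..N. cint xs j (\<lambda>x. cfun \<alpha> \<beta> (poly (\<psi> t j) x) * poly (v t j) x * poly (pderiv (\<eta> j)) x))
      - (\<Sum>j=1..N. cbar \<alpha> \<beta> xs N (\<psi> t) j * avg xs N (v t) j * trm xs N \<eta> j)
      + (\<Sum>j=1..N. cbar \<alpha> \<beta> xs N (\<psi> t) (j - 1) * avg xs N (v t) (j - 1) * trp xs N \<eta> (j - 1))
      = 0"
    and eq3: "\<And>t \<zeta>. t \<in> {0..T} \<Longrightarrow> \<zeta> \<in> Xsp N p \<Longrightarrow>
        (\<Sum>j=1..N. cint xs j (\<lambda>x. poly (\<psi>t t j) x * poly (\<zeta> j) x))
      = (\<Sum>j=1..N. cint xs j (\<lambda>x. poly (v t j) x * poly (\<zeta> j) x))"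
    and "t \<in> {0..T}"
  shows "((\<lambda>s. \<Sum>j=1..N. cint xs j (\<lambda>x. (poly (v s j) x)\<^sup>2 + (poly (w s j) x)\<^sup>2))
           has_real_derivative 0) (at t within {0..T})"
proof -
  note tT = \<open>t \<in> {0..T}\<close>
  have vX: "v t \<in> Xsp N p" and wX: "w t \<in> Xsp N p" using inX[OF tT] by auto
  have deg: "degree (v s j) \<le> p" "degree (w s j) \<le> p" if "s \<in> {0..T}" "j \<in> {1..N}" for s j
    using inX[OF that(1)] that(2) unfolding Xsp_def by auto
  have product_rule:
    "(\<Sum>j=1..N. cint xs j (\<lambda>x. cfun \<alpha> \<beta> (poly (\<psi> t j) x) * poly (w t j) x * poly (pderiv (v t j)) x))
   + (\<Sum>j=1..N. cint xs j (\<lambda>x. cfun \<alpha> \<beta> (poly (\<psi> t j) x) * poly (v t j) x * poly (pderiv (w t j)) x))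
   = (\<Sum>j=1..N. cint xs j (\<lambda>x. cfun \<alpha> \<beta> (poly (\<psi> t j) x) * poly (pderiv (w t j * v t j)) x))"
    unfolding sum.distrib[symmetric]
    by (intro sum.cong refl cint_pderiv_mult) (auto simp: cfun_def intro!: continuous_intros)
  have energy_rate: "(\<Sum>j=1..N. cint xs j (\<lambda>x. poly (vt t j) x * poly (v t j) x))
                   + (\<Sum>j=1..N. cint xs j (\<lambda>x. poly (wt t j) x * poly (w t j) x)) = 0"
    using eq1[OF tT vX] eq2[OF tT wX] product_rule
      central_flux_balance[where c = "cbar \<alpha> \<beta> xs N (\<psi> t)" and xs = xs and W = "w t" and V = "v t",
        OF cbar_periodic]
    by linarith
  have split: "cint xs j (\<lambda>x. (poly (v s j) x)\<^sup>2 + (poly (w s j) x)\<^sup>2)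
      = cint xs j (\<lambda>x. (poly (v s j) x)\<^sup>2) + cint xs j (\<lambda>x. (poly (w s j) x)\<^sup>2)" for s j
    unfolding cint_def by (rule integral_add) (auto intro!: integrable_continuous_interval continuous_intros)
  have dv_cell: "((\<lambda>s. cint xs j (\<lambda>x. (poly (v s j) x)\<^sup>2)) has_real_derivative
      2 * cint xs j (\<lambda>x. poly (vt t j) x * poly (v t j) x)) (at t within {0..T})"
    and dw_cell: "((\<lambda>s. cint xs j (\<lambda>x. (poly (w s j) x)\<^sup>2)) has_real_derivative
      2 * cint xs j (\<lambda>x. poly (wt t j) x * poly (w t j) x)) (at t within {0..T})"
    if j: "j \<in> {1..N}" for j
    unfolding cint_def using deg j mesh_cell_nonempty[OF \<open>mesh xs N\<close> j]
    by (auto intro!: has_real_derivative_integral_poly_square[where p = p] tT dv[OF tT j] dw[OF tT j])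
  have energy_deriv: "((\<lambda>s. \<Sum>j=1..N. cint xs j (\<lambda>x. (poly (v s j) x)\<^sup>2 + (poly (w s j) x)\<^sup>2)) has_real_derivative
      (\<Sum>j=1..N. 2 * cint xs j (\<lambda>x. poly (vt t j) x * poly (v t j) x)
                + 2 * cint xs j (\<lambda>x. poly (wt t j) x * poly (w t j) x))) (at t within {0..T})"
    unfolding split by (intro DERIV_sum DERIV_add dv_cell dw_cell)
  have "(\<Sum>j=1..N. 2 * cint xs j (\<lambda>x. poly (vt t j) x * poly (v t j) x)
                + 2 * cint xs j (\<lambda>x. poly (wt t j) x * poly (w t j) x))
      = 2 * ((\<Sum>j=1..N. cint xs j (\<lambda>x. poly (vt t j) x * poly (v t j) x))
           + (\<Sum>j=1..N. cint xs j (\<lambda>x. poly (wt t j) x * poly (w t j) x)))"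
    by (simp add: sum.distrib sum_distrib_left)
  with energy_deriv energy_rate show ?thesis by simp
qed

end
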